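(* Let $\mu_{[\cdot,\cdot]}\in(\mathbb{C}^{2\times2})^*\otimes(\mathbb{C}^{2\times2})^*\otimes\mathbb{C}^{2\times2}$ be the structure tensor of the commutator map $\mathbb{C}^{2\times2}\times\mathbb{C}^{2\times2}\to\mathbb{C}^{2\times2}$, $(A,X)\mapsto AX-XA$. Then $\operatorname{rank}(\mu_{[\cdot,\cdot]})\in\{5,6\}$ and $\underline{\operatorname{rank}}(\mu_{[\cdot,\cdot]})=5$.
   Context: Structure tensor of a bilinear map $\beta:U\times V\to W$: the unique $\mu_\beta\in U^*\otimes V^*\otimes W$ with $\beta(u,v)=\mu_\beta(u,v,\cdot)$. Rank: least number of decomposable tensors summing to the tensor; border rank: least $r$ such that it is a limit of tensors of rank at most $r$. *)

theory Defs
  imports "HOL-Analysis.Analysis"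
begin

text \<open>Tensors in U* (x) V* (x) W with finite index types (coordinates w.r.t. bases),
  represented as coefficient functions.\<close>

definition tensor_rank :: "('a \<Rightarrow> 'b \<Rightarrow> 'c \<Rightarrow> complex) \<Rightarrow> nat" where
  "tensor_rank T = (LEAST r. \<exists>(a :: nat \<Rightarrow> 'a \<Rightarrow> complex) (b :: nat \<Rightarrow> 'b \<Rightarrow> complex)
        (c :: nat \<Rightarrow> 'c \<Rightarrow> complex). T = (\<lambda>x y z. \<Sum>l<r. a l x * b l y * c l z))"

text \<open>Border rank: least r such that T is a limit (product topology = Euclidean topology
  on the finite-dimensional coefficient space) of tensors of rank at most r.\<close>
definition border_rank :: "('a \<Rightarrow> 'b \<Rightarrow> 'c \<Rightarrow> complex) \<Rightarrow> nat" where
  "border_rank T = (LEAST r. \<exists>S :: nat \<Rightarrow> ('a \<Rightarrow> 'b \<Rightarrow> 'c \<Rightarrow> complex).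
        (\<forall>n. tensor_rank (S n) \<le> r) \<and> (S \<longlonglongrightarrow> T))"

definition mat_unit :: "2 \<times> 2 \<Rightarrow> complex^2^2" where
  "mat_unit p = (\<chi> i j. if i = fst p \<and> j = snd p then 1 else 0)"

definition struct_tensor :: "(complex^2^2 \<Rightarrow> complex^2^2 \<Rightarrow> complex^2^2)
      \<Rightarrow> (2 \<times> 2) \<Rightarrow> (2 \<times> 2) \<Rightarrow> (2 \<times> 2) \<Rightarrow> complex" where
  "struct_tensor \<beta> = (\<lambda>x y z. \<beta> (mat_unit x) (mat_unit y) $ fst z $ snd z)"

definition commutator :: "complex^2^2 \<Rightarrow> complex^2^2 \<Rightarrow> complex^2^2" where
  "commutator A X = A ** X - X ** A"

end

theory Submission
  imports Defs
begin

text \<open>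
  Write \<open>h = E11 - E22\<close>, \<open>e = E12\<close>, \<open>f = E21\<close>. As the identity is central, the commutator tensor is
  \<open>h\<otimes>e\<otimes>e - h\<otimes>f\<otimes>f - e\<otimes>h\<otimes>e + e\<otimes>f\<otimes>h + f\<otimes>h\<otimes>f - f\<otimes>e\<otimes>h\<close>, of rank at most 6. Adding
  \<open>t (e\<otimes>f\<otimes>e - f\<otimes>e\<otimes>f)\<close> gives a tensor of rank at most 5 for \<open>t \<noteq> 0\<close>; letting \<open>t \<rightarrow> 0\<close> shows
  that the border rank is at most 5.

  For the lower bound, restrict each factor to the coordinates \<open>E11, E12, E21\<close>: the result is
  the Levi-Civita tensor \<open>\<epsilon>\<close> of \<open>\<complex>\<^sup>3\<close>. Its Koszul flattening
  \<open>\<complex>\<^sup>3 \<otimes> \<complex>\<^sup>3 \<rightarrow> \<Lambda>\<^sup>2\<complex>\<^sup>3 \<otimes> \<complex>\<^sup>3\<close> is a \<open>9 \<times> 9\<close> matrix depending linearly on the tensor; it has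
  rank at most 2 for a rank-one tensor, because \<open>b \<mapsto> a \<and> b\<close> has rank at most 2, yet it is
  invertible for \<open>\<epsilon>\<close>.
  Hence the determinant of the flattened restriction is a continuous function vanishing on all
  tensors of rank at most 4 but not on the commutator tensor.
\<close>

section \<open>Rank and border rank\<close>

lemma tensor_rank_le:
  fixes T :: "'a \<Rightarrow> 'b \<Rightarrow> 'c \<Rightarrow> complex"
  assumes "T = (\<lambda>x y z. \<Sum>l<r. a l x * b l y * c l z)"
  shows "tensor_rank T \<le> r"
  unfolding tensor_rank_def by (rule Least_le) (use assms in blast)

lemma tensor_decomposition_reindex:
  fixes T :: "'a \<Rightarrow> 'b \<Rightarrow> 'c \<Rightarrow> complex"
  assumes "finite K" and T: "T = (\<lambda>x y z. \<Sum>k\<in>K. a k x * b k y * c k z)"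
  shows "\<exists>a' b' c'. T = (\<lambda>x y z. \<Sum>l<card K. a' l x * b' l y * c' l z)"
proof -
  obtain h where h: "bij_betw h {..<card K} K"
    using ex_bij_betw_nat_finite[OF \<open>finite K\<close>] by (auto simp: atLeast0LessThan)
  have "T = (\<lambda>x y z. \<Sum>l<card K. a (h l) x * b (h l) y * c (h l) z)"
    unfolding T by (intro ext) (rule sum.reindex_bij_betw[OF h, symmetric])
  then show ?thesis
    by (intro exI[of _ "\<lambda>l. a (h l)"] exI[of _ "\<lambda>l. b (h l)"] exI[of _ "\<lambda>l. c (h l)"])
qed

lemma tensor_decomposition:
  fixes T :: "'a::finite \<Rightarrow> 'b::finite \<Rightarrow> 'c::finite \<Rightarrow> complex"
  obtains a b c where "T = (\<lambda>x y z. \<Sum>l<tensor_rank T. a l x * b l y * c l z)"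
proof -
  let ?K = "UNIV :: ('a \<times> 'b \<times> 'c) set"
  define a where "a k x = (if x = fst k then T (fst k) (fst (snd k)) (snd (snd k)) else 0)" for k x
  define b :: "'a \<times> 'b \<times> 'c \<Rightarrow> 'b \<Rightarrow> complex" where "b k y = (if y = fst (snd k) then 1 else 0)" for k y
  define c :: "'a \<times> 'b \<times> 'c \<Rightarrow> 'c \<Rightarrow> complex" where "c k z = (if z = snd (snd k) then 1 else 0)" for k z
  have "T = (\<lambda>x y z. \<Sum>k\<in>?K. a k x * b k y * c k z)"
  proof (intro ext)
    fix x y z
    have "T x y z = (\<Sum>k\<in>?K. if k = (x, y, z) then T x y z else 0)"
      by simp
    also have "\<dots> = (\<Sum>k\<in>?K. a k x * b k y * c k z)"
      unfolding a_def b_def c_def by (rule sum.cong) auto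
    finally show "T x y z = \<dots>" .
  qed
  then obtain a' b' c' where "T = (\<lambda>x y z. \<Sum>l<card ?K. a' l x * b' l y * c' l z)"
    using tensor_decomposition_reindex[OF finite] by blast
  then have "\<exists>(r::nat) a b c. T = (\<lambda>x y z. \<Sum>l<r. a l x * b l y * c l z)"
    by blast
  then have "\<exists>a b c. T = (\<lambda>x y z. \<Sum>l<tensor_rank T. a l x * b l y * c l z)"
    unfolding tensor_rank_def by (rule LeastI_ex)
  with that show ?thesis by blast
qed

lemma tensor_rank_restrict_le:
  fixes T :: "'a::finite \<Rightarrow> 'b::finite \<Rightarrow> 'c::finite \<Rightarrow> complex"
  shows "tensor_rank (\<lambda>x y z. T (f x) (g y) (h z)) \<le> tensor_rank T"
proof -
  obtain a b c where "T = (\<lambda>x y z. \<Sum>l<tensor_rank T. a l x * b l y * c l z)"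
    by (rule tensor_decomposition)
  then have "(\<lambda>x y z. T (f x) (g y) (h z)) =
      (\<lambda>x y z. \<Sum>l<tensor_rank T. a l (f x) * b l (g y) * c l (h z))"
    by (rule arg_cong[where f = "\<lambda>T x y z. T (f x) (g y) (h z)"])
  then show ?thesis by (rule tensor_rank_le)
qed

lemma border_rank_eqI:
  fixes T :: "'a \<Rightarrow> 'b \<Rightarrow> 'c \<Rightarrow> complex"
  assumes "\<And>n. tensor_rank (S n) \<le> r" and "S \<longlonglongrightarrow> T"
    and "\<And>S'. (\<And>n. tensor_rank (S' n) < r) \<Longrightarrow> S' \<longlonglongrightarrow> T \<Longrightarrow> False"
  shows "border_rank T = r"
  unfolding border_rank_def
proof (rule Least_equality)
  show "\<exists>S. (\<forall>n. tensor_rank (S n) \<le> r) \<and> S \<longlonglongrightarrow> T"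
    using assms(1,2) by blast
next
  fix r'
  assume "\<exists>S. (\<forall>n. tensor_rank (S n) \<le> r') \<and> S \<longlonglongrightarrow> T"
  then obtain S' where "\<And>n. tensor_rank (S' n) \<le> r'" "S' \<longlonglongrightarrow> T" by blast
  then show "r \<le> r'"
    using assms(3)[of S'] by (meson le_less_trans not_le)
qed

lemma continuous_on_tensor_entry:
  "continuous_on UNIV (\<lambda>T :: 'a \<Rightarrow> 'b \<Rightarrow> 'c \<Rightarrow> 'd::topological_space. T x y z)"
proof -
  have "continuous_on UNIV ((\<lambda>G. G z) \<circ> (\<lambda>F. F y) \<circ> (\<lambda>T :: 'a \<Rightarrow> 'b \<Rightarrow> 'c \<Rightarrow> 'd. T x))"
    by (intro continuous_on_compose)
      (auto intro: continuous_on_subset[OF continuous_on_product_coordinates])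
  then show ?thesis by (simp add: o_def)
qed

lemma limit_of_rank_le_vanishing:
  fixes \<phi> :: "('a \<Rightarrow> 'b \<Rightarrow> 'c \<Rightarrow> complex) \<Rightarrow> 'd::{t2_space, zero}"
  assumes "continuous_on UNIV \<phi>" and "\<And>T. tensor_rank T \<le> r \<Longrightarrow> \<phi> T = 0"
    and "\<And>n. tensor_rank (S n) \<le> r" and "S \<longlonglongrightarrow> T"
  shows "\<phi> T = 0"
proof -
  have "(\<lambda>n. \<phi> (S n)) \<longlonglongrightarrow> \<phi> T"
    using continuous_on_tendsto_compose[OF assms(1) assms(4)] by simp
  moreover have "(\<lambda>n. \<phi> (S n)) = (\<lambda>n. 0)"
    using assms(2,3) by simp
  ultimately show ?thesis
    using LIMSEQ_unique tendsto_const by metis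
qed

section \<open>A Koszul flattening of \<open>\<complex>\<^sup>3 \<otimes> \<complex>\<^sup>3 \<otimes> \<complex>\<^sup>3\<close>\<close>

lemma matrix_eqI:
  fixes A B :: "'a^'m^'n"
  assumes "\<And>i j. A $ i $ j = B $ i $ j"
  shows "A = B"
  using assms by (simp add: vec_eq_iff)

definition outer_prod :: "'a::times^'n \<Rightarrow> 'a^'m \<Rightarrow> 'a^'m^'n" where
  "outer_prod u w = (\<chi> i j. u $ i * w $ j)"

lemma det_sum_outer_prod_eq_0:
  fixes u w :: "'k \<Rightarrow> 'a::field^'n"
  assumes "finite K" and "card K < CARD('n)"
  shows "det (\<Sum>k\<in>K. outer_prod (u k) (w k)) = 0"
proof -
  obtain f :: "'k \<Rightarrow> 'n" where f: "inj_on f K"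
    using card_le_inj[of K "UNIV :: 'n set"] assms by auto
  have "card (f ` K) < CARD('n)"
    using assms f by (simp add: card_image)
  then have "f ` K \<noteq> UNIV" by auto
  then obtain j0 where j0: "j0 \<notin> f ` K" by auto
  define g where "g = inv_into K f"
  define X :: "'a^'n^'n" where "X = (\<chi> i j. if j \<in> f ` K then u (g j) $ i else 0)"
  define Y :: "'a^'n^'n" where "Y = (\<chi> j c. if j \<in> f ` K then w (g j) $ c else 0)"
  have "(\<Sum>k\<in>K. outer_prod (u k) (w k)) = X ** Y"
  proof (rule matrix_eqI)
    fix i c
    have "(X ** Y) $ i $ c = (\<Sum>j\<in>f ` K. u (g j) $ i * w (g j) $ c)"
      unfolding matrix_matrix_mult_def X_def Y_def by (simp add: if_distrib sum.If_cases cong: if_cong)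
    also have "\<dots> = (\<Sum>k\<in>K. u k $ i * w k $ c)"
      using f by (simp add: sum.reindex g_def)
    finally show "(\<Sum>k\<in>K. outer_prod (u k) (w k)) $ i $ c = (X ** Y) $ i $ c"
      by (simp add: outer_prod_def)
  qed
  moreover have "column j0 X = 0"
    using j0 by (simp add: column_def X_def vec_eq_iff)
  ultimately show ?thesis
    by (simp add: det_mul det_zero_column)
qed

definition levi_civita :: "3 \<Rightarrow> 3 \<Rightarrow> 3 \<Rightarrow> complex" where
  "levi_civita i j k =
    (if (i, j, k) = (1, 2, 3) \<or> (i, j, k) = (2, 3, 1) \<or> (i, j, k) = (3, 1, 2) then 1
     else if (i, j, k) = (1, 3, 2) \<or> (i, j, k) = (3, 2, 1) \<or> (i, j, k) = (2, 1, 3) then -1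
     else 0)"

text \<open>The rows \<open>M\<^sub>s\<close> of the matrix of \<open>b \<mapsto> \<alpha> \<and> b\<close> satisfy \<open>\<Sum>\<^sub>s \<alpha>\<^sub>s M\<^sub>s = 0\<close>: if \<open>\<alpha>\<^sub>k \<noteq> 0\<close>, row
  \<open>k\<close> is a combination of the other two, and if \<open>\<alpha>\<^sub>1 = \<alpha>\<^sub>2 = 0\<close> the third row vanishes.\<close>

lemma levi_civita_contraction_decomposition:
  fixes \<alpha> :: "3 \<Rightarrow> complex"
  shows "\<exists>X Y :: nat \<Rightarrow> 3 \<Rightarrow> complex.
    \<forall>s p. (\<Sum>x\<in>UNIV. levi_civita x p s * \<alpha> x) = (\<Sum>i<2. X i s * Y i p)"
proof -
  define M where "M s p = (\<Sum>x\<in>UNIV. levi_civita x p s * \<alpha> x)" for s p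
  obtain X0 X1 :: "3 \<Rightarrow> complex" and s1 s2 :: 3
    where rows: "\<forall>s p. M s p = X0 s * M s1 p + X1 s * M s2 p"
  proof (cases "\<alpha> 1 \<noteq> 0")
    case True
    show ?thesis
      by (rule that[of "\<lambda>s. if s = 2 then 1 else if s = 1 then - \<alpha> 2 / \<alpha> 1 else 0" 2
            "\<lambda>s. if s = 3 then 1 else if s = 1 then - \<alpha> 3 / \<alpha> 1 else 0" 3])
        (use True in \<open>simp add: M_def forall_3 sum_3 levi_civita_def field_simps\<close>)
  next
    case False
    show ?thesis
    proof (cases "\<alpha> 2 \<noteq> 0")
      case True
      show ?thesis
        by (rule that[of "\<lambda>s. if s = 1 then 1 else if s = 2 then - \<alpha> 1 / \<alpha> 2 else 0" 1
            "\<lambda>s. if s = 3 then 1 else if s = 2 then - \<alpha> 3 / \<alpha> 2 else 0" 3])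
          (use True in \<open>simp add: M_def forall_3 sum_3 levi_civita_def field_simps\<close>)
    next
      case False
      show ?thesis
        by (rule that[of "\<lambda>s. if s = 1 then 1 else 0" 1
            "\<lambda>s. if s = 2 then 1 else 0" 2])
          (use \<open>\<not> \<alpha> 1 \<noteq> 0\<close> False in \<open>simp add: M_def forall_3 sum_3 levi_civita_def\<close>)
    qed
  qed
  define X :: "nat \<Rightarrow> 3 \<Rightarrow> complex" where "X i = (if i = 0 then X0 else X1)" for i
  define Y :: "nat \<Rightarrow> 3 \<Rightarrow> complex" where "Y i = (if i = 0 then M s1 else M s2)" for i
  have "M s p = (\<Sum>i<2. X i s * Y i p)" for s p
    using rows[rule_format, of s p] by (simp add: X_def Y_def eval_nat_numeral)
  then show ?thesis
    unfolding M_def by blast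
qed

text \<open>The Koszul flattening \<open>e\<^sub>p \<otimes> e\<^sub>q \<mapsto> \<Sum>\<^sub>x (e\<^sub>x \<and> e\<^sub>p) \<otimes> T(e\<^sub>x, e\<^sub>q, -)\<close>, with
  \<open>\<Lambda>\<^sup>2\<complex>\<^sup>3 \<cong> \<complex>\<^sup>3\<close> via \<open>\<epsilon>\<close>: columns are indexed by \<open>(p, q)\<close>, rows by a \<open>\<Lambda>\<^sup>2\<close> coordinate and
  a coordinate of the third factor.\<close>

definition koszul_flattening :: "(3 \<Rightarrow> 3 \<Rightarrow> 3 \<Rightarrow> complex) \<Rightarrow> complex^(3 \<times> 3)^(3 \<times> 3)" where
  "koszul_flattening T =
    (\<chi> r c. \<Sum>x\<in>UNIV. levi_civita x (fst c) (fst r) * T x (snd c) (snd r))"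

lemma koszul_flattening_sum:
  "koszul_flattening (\<lambda>x y z. \<Sum>l\<in>L. T l x y z) = (\<Sum>l\<in>L. koszul_flattening (T l))"
  unfolding koszul_flattening_def
  by (simp add: vec_eq_iff sum_distrib_left sum.swap[of _ L])

lemma koszul_flattening_rank_one:
  "\<exists>U W :: nat \<Rightarrow> complex^(3 \<times> 3).
    koszul_flattening (\<lambda>x y z. a x * b y * c z) = (\<Sum>i<2. outer_prod (U i) (W i))"
proof -
  obtain X Y :: "nat \<Rightarrow> 3 \<Rightarrow> complex" where XY:
    "\<forall>s p. (\<Sum>x\<in>UNIV. levi_civita x p s * a x) = (\<Sum>i<2. X i s * Y i p)"
    using levi_civita_contraction_decomposition by blast
  define U :: "nat \<Rightarrow> complex^(3 \<times> 3)" where "U i = (\<chi> r. X i (fst r) * c (snd r))" for i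
  define W :: "nat \<Rightarrow> complex^(3 \<times> 3)" where "W i = (\<chi> r. Y i (fst r) * b (snd r))" for i
  have "koszul_flattening (\<lambda>x y z. a x * b y * c z) = (\<Sum>i<2. outer_prod (U i) (W i))"
  proof (rule matrix_eqI)
    fix r col :: "3 \<times> 3"
    have "koszul_flattening (\<lambda>x y z. a x * b y * c z) $ r $ col
       = (\<Sum>x\<in>UNIV. levi_civita x (fst col) (fst r) * a x) * b (snd col) * c (snd r)"
      unfolding koszul_flattening_def by (simp add: sum_distrib_left sum_distrib_right mult_ac)
    also have "\<dots> = (\<Sum>i<2. X i (fst r) * Y i (fst col)) * b (snd col) * c (snd r)"
      using XY by simp
    also have "\<dots> = (\<Sum>i<2. outer_prod (U i) (W i)) $ r $ col"
      unfolding U_def W_def outer_prod_def by (simp add: sum_distrib_left sum_distrib_right mult_ac)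
    finally show "koszul_flattening (\<lambda>x y z. a x * b y * c z) $ r $ col =
      (\<Sum>i<2. outer_prod (U i) (W i)) $ r $ col" .
  qed
  then show ?thesis by blast
qed

lemma det_koszul_flattening_eq_0:
  assumes "tensor_rank T \<le> 4"
  shows "det (koszul_flattening T) = 0"
proof -
  obtain a b c where T: "T = (\<lambda>x y z. \<Sum>l<tensor_rank T. a l x * b l y * c l z)"
    by (rule tensor_decomposition)
  obtain U W :: "nat \<Rightarrow> nat \<Rightarrow> complex^(3 \<times> 3)" where UW:
    "\<And>l. koszul_flattening (\<lambda>x y z. a l x * b l y * c l z) = (\<Sum>i<2. outer_prod (U l i) (W l i))"
  proof -
    have "\<forall>l. \<exists>U W. koszul_flattening (\<lambda>x y z. a l x * b l y * c l z) = (\<Sum>i::nat<2. outer_prod (U i) (W i))"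
      using koszul_flattening_rank_one by blast
    then show ?thesis
      using that by metis
  qed
  have "koszul_flattening T =
      (\<Sum>k\<in>{..<tensor_rank T} \<times> {..<2}. outer_prod (U (fst k) (snd k)) (W (fst k) (snd k)))"
    by (subst T) (simp add: koszul_flattening_sum UW sum.cartesian_product split_def)
  moreover have "card ({..<tensor_rank T} \<times> {..<2::nat}) < CARD(3 \<times> 3)"
    using assms by (simp add: card_cartesian_product)
  ultimately show ?thesis
    by (simp add: det_sum_outer_prod_eq_0)
qed

lemma continuous_on_det_koszul_flattening:
  "continuous_on UNIV (\<lambda>T. det (koszul_flattening (\<lambda>i j k. T (f i) (g j) (h k))))"
  unfolding det_def koszul_flattening_def vec_lambda_beta
  by (intro continuous_intros continuous_on_tensor_entry)

text \<open>The flattening of \<open>\<epsilon>\<close> is \<open>J - P\<close>, where \<open>J\<close> is the rank-one matrix of the trace pairing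
  and \<open>P\<close> the swap of the two tensor factors; it is inverted by \<open>J/2 - P\<close>, since \<open>J\<^sup>2 = 3J\<close>,
  \<open>JP = PJ = J\<close> and \<open>P\<^sup>2 = 1\<close>.\<close>

lemma koszul_flattening_levi_civita_inverse:
  "koszul_flattening levi_civita **
     (\<chi> c r. (if fst c = snd c \<and> fst r = snd r then 1/2 else 0)
             - (if snd c = fst r \<and> fst c = snd r then 1 else 0)) = mat 1"
    (is "?K ** ?G = _")
proof -
  have entry: "\<forall>s z p q :: 3. ?K $ (s, z) $ (p, q) =
      (if p = q \<and> s = z then 1 else 0) - (if p = z \<and> s = q then 1 else 0)"
    unfolding koszul_flattening_def
    by (simp only: vec_lambda_beta fst_conv snd_conv forall_3 sum_3) (simp add: levi_civita_def)
  have product: "\<forall>s z a b :: 3. (\<Sum>p\<in>UNIV. \<Sum>q\<in>UNIV.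
      ((if p = q \<and> s = z then 1 else 0) - (if p = z \<and> s = q then 1 else 0)) *
      ((if p = q \<and> a = b then 1/2 else 0) - (if q = a \<and> p = b then 1 else 0))) =
      (if (s, z) = (a, b) then 1 else (0::complex))"
    by (simp only: forall_3 sum_3) simp
  show ?thesis
  proof (rule matrix_eqI)
    fix r c :: "3 \<times> 3"
    obtain s z a b where rc: "r = (s, z)" "c = (a, b)"
      by (cases r, cases c)
    have "(?K ** ?G) $ r $ c = (\<Sum>p\<in>UNIV. \<Sum>q\<in>UNIV. ?K $ (s, z) $ (p, q) * ?G $ (p, q) $ (a, b))"
      by (simp add: rc matrix_matrix_mult_def sum.cartesian_product split_def flip: UNIV_Times_UNIV)
    also have "\<dots> = mat 1 $ r $ c"
      using entry product by (simp add: rc mat_def)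
    finally show "(?K ** ?G) $ r $ c = mat 1 $ r $ c" .
  qed
qed

lemma det_koszul_flattening_levi_civita: "det (koszul_flattening levi_civita) \<noteq> 0"
  using arg_cong[OF koszul_flattening_levi_civita_inverse, of det]
  by (auto simp: det_mul)

section \<open>The commutator tensor of \<open>2 \<times> 2\<close> matrices\<close>

lemma mat_unit_mult:
  "mat_unit (a, b) ** mat_unit (c, d) = (if b = c then mat_unit (a, d) else 0)"
proof -
  have "(if i = a \<and> k = b then 1 else 0) * (if k = c \<and> j = d then 1 else 0)
      = (if k = b then (if i = a \<and> b = c \<and> j = d then 1 else 0) else (0::complex))" for i j k
    by auto
  then show ?thesis
    unfolding matrix_matrix_mult_def mat_unit_def
    by (simp only: vec_lambda_beta fst_conv snd_conv sum.delta' finite UNIV_I if_True)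
      (auto simp: vec_eq_iff)
qed

lemma commutator_mat_unit:
  "commutator (mat_unit (a, b)) (mat_unit (c, d)) $ i $ j =
   (if a = i \<and> b = c \<and> d = j then 1 else 0) - (if c = i \<and> d = a \<and> b = j then 1 else 0)"
proof -
  have unit: "mat_unit (p, q) $ i $ j = (if p = i \<and> q = j then 1 else 0)" for p q
    by (simp add: mat_unit_def eq_commute)
  have "commutator (mat_unit (a, b)) (mat_unit (c, d)) $ i $ j =
      (if b = c then mat_unit (a, d) $ i $ j else 0) - (if d = a then mat_unit (c, b) $ i $ j else 0)"
    unfolding commutator_def mat_unit_mult by simp
  then show ?thesis
    unfolding unit by auto
qed

definition sl2_h :: "2 \<times> 2 \<Rightarrow> complex" where
  "sl2_h p = (if p = (1, 1) then 1 else if p = (2, 2) then -1 else 0)"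

definition sl2_e :: "2 \<times> 2 \<Rightarrow> complex" where
  "sl2_e p = (if p = (1, 2) then 1 else 0)"

definition sl2_f :: "2 \<times> 2 \<Rightarrow> complex" where
  "sl2_f p = (if p = (2, 1) then 1 else 0)"

lemma struct_tensor_commutator:
  "struct_tensor commutator = (\<lambda>x y z.
      sl2_h x * sl2_e y * sl2_e z - sl2_h x * sl2_f y * sl2_f z - sl2_e x * sl2_h y * sl2_e z
    + sl2_e x * sl2_f y * sl2_h z + sl2_f x * sl2_h y * sl2_f z - sl2_f x * sl2_e y * sl2_h z)"
proof -
  have "\<forall>a b c d i j :: 2. struct_tensor commutator (a, b) (c, d) (i, j) =
      sl2_h (a, b) * sl2_e (c, d) * sl2_e (i, j) - sl2_h (a, b) * sl2_f (c, d) * sl2_f (i, j)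
    - sl2_e (a, b) * sl2_h (c, d) * sl2_e (i, j) + sl2_e (a, b) * sl2_f (c, d) * sl2_h (i, j)
    + sl2_f (a, b) * sl2_h (c, d) * sl2_f (i, j) - sl2_f (a, b) * sl2_e (c, d) * sl2_h (i, j)"
    unfolding struct_tensor_def fst_conv snd_conv commutator_mat_unit sl2_h_def sl2_e_def sl2_f_def
    by (simp only: forall_2) simp
  then show ?thesis
    by (intro ext) (metis surj_pair)
qed

lemma tensor_rank_commutator_le_6: "tensor_rank (struct_tensor commutator) \<le> 6"
proof (rule tensor_rank_le)
  show "struct_tensor commutator = (\<lambda>x y z. \<Sum>l<6.
      ([sl2_h, \<lambda>x. - sl2_h x, \<lambda>x. - sl2_e x, sl2_e, sl2_f, \<lambda>x. - sl2_f x] ! l) x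
    * ([sl2_e, sl2_f, sl2_h, sl2_f, sl2_h, sl2_e] ! l) y
    * ([sl2_e, sl2_f, sl2_e, sl2_h, sl2_f, sl2_h] ! l) z)"
    unfolding struct_tensor_commutator by (intro ext) (simp add: eval_nat_numeral algebra_simps)
qed

definition commutator_degeneration :: "complex \<Rightarrow> 2 \<times> 2 \<Rightarrow> 2 \<times> 2 \<Rightarrow> 2 \<times> 2 \<Rightarrow> complex" where
  "commutator_degeneration t = (\<lambda>x y z. struct_tensor commutator x y z
      + t * (sl2_e x * sl2_f y * sl2_e z - sl2_f x * sl2_e y * sl2_f z))"

lemma tensor_rank_commutator_degeneration_le_5:
  assumes "t \<noteq> 0"
  shows "tensor_rank (commutator_degeneration t) \<le> 5"
proof (rule tensor_rank_le)
  have "h1*e2*e3 - h1*f2*f3 - e1*h2*e3 + e1*f2*h3 + f1*h2*f3 - f1*e2*h3 + t*(e1*f2*e3 - f1*e2*f3)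
      = f1/t * (h2 - t*e2) * (h3 + t*f3) + (-e1/t) * (h2 - t*f2) * (h3 + t*e3)
        + (e1 - f1)/t * h2 * h3 + h1 * e2 * e3 + (- h1) * f2 * f3"
    for h1 e1 f1 h2 e2 f2 h3 e3 f3 :: complex
    using assms by (simp add: field_simps)
  then show "commutator_degeneration t = (\<lambda>x y z. \<Sum>l<5.
      ([\<lambda>x. sl2_f x / t, \<lambda>x. - sl2_e x / t, \<lambda>x. (sl2_e x - sl2_f x) / t, sl2_h, \<lambda>x. - sl2_h x] ! l) x
    * ([\<lambda>y. sl2_h y - t * sl2_e y, \<lambda>y. sl2_h y - t * sl2_f y, sl2_h, sl2_e, sl2_f] ! l) y
    * ([\<lambda>z. sl2_h z + t * sl2_f z, \<lambda>z. sl2_h z + t * sl2_e z, sl2_h, sl2_e, sl2_f] ! l) z)"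
    unfolding commutator_degeneration_def struct_tensor_commutator
    by (intro ext) (simp add: eval_nat_numeral)
qed

lemma commutator_degeneration_tendsto:
  "(\<lambda>n. commutator_degeneration (1 / of_nat (Suc n))) \<longlonglongrightarrow> struct_tensor commutator"
proof -
  have "continuous_on UNIV commutator_degeneration"
    unfolding commutator_degeneration_def
    by (intro continuous_on_coordinatewise_then_product continuous_intros)
  moreover have "(\<lambda>n. 1 / of_nat (Suc n) :: complex) \<longlonglongrightarrow> 0"
    using LIMSEQ_Suc[OF lim_1_over_n] by simp
  ultimately have "(\<lambda>n. commutator_degeneration (1 / of_nat (Suc n))) \<longlonglongrightarrow> commutator_degeneration 0"
    using continuous_on_tendsto_compose by (metis UNIV_I eventually_sequentiallyI)
  then show ?thesis
    by (simp add: commutator_degeneration_def)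
qed

text \<open>The coordinates \<open>E11, E12, E21\<close>; in the output factor they are listed as \<open>E11, E21, E12\<close>,
  which makes the restriction of the commutator tensor equal to \<open>\<epsilon>\<close> on the nose.\<close>

definition coord_in :: "3 \<Rightarrow> 2 \<times> 2" where
  "coord_in i = (if i = 1 then (1, 1) else if i = 2 then (1, 2) else (2, 1))"

definition coord_out :: "3 \<Rightarrow> 2 \<times> 2" where
  "coord_out i = (if i = 1 then (1, 1) else if i = 2 then (2, 1) else (1, 2))"

lemma struct_tensor_commutator_restrict:
  "(\<lambda>i j k. struct_tensor commutator (coord_in i) (coord_in j) (coord_out k)) = levi_civita"
proof -
  have "\<forall>i j k. struct_tensor commutator (coord_in i) (coord_in j) (coord_out k) = levi_civita i j k"
    unfolding struct_tensor_commutator coord_in_def coord_out_def sl2_h_def sl2_e_def sl2_f_def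
      levi_civita_def
    by (simp only: forall_3) simp
  then show ?thesis by blast
qed

lemma commutator_not_limit_of_rank_le_4:
  assumes "\<And>n. tensor_rank (S n) \<le> 4" and "S \<longlonglongrightarrow> struct_tensor commutator"
  shows False
proof -
  let ?\<phi> = "\<lambda>T. det (koszul_flattening (\<lambda>i j k. T (coord_in i) (coord_in j) (coord_out k)))"
  have "?\<phi> (struct_tensor commutator) = 0"
  proof (rule limit_of_rank_le_vanishing[OF continuous_on_det_koszul_flattening _ assms])
    show "?\<phi> T = 0" if "tensor_rank T \<le> 4" for T
      using order_trans[OF tensor_rank_restrict_le that] by (rule det_koszul_flattening_eq_0)
  qed
  then show False
    using det_koszul_flattening_levi_civita unfolding struct_tensor_commutator_restrict by simp
qed

theorem mainTheorem18:
  shows "tensor_rank (struct_tensor commutator) \<in> {5, 6} \<and>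
         border_rank (struct_tensor commutator) = 5"
proof -
  have "border_rank (struct_tensor commutator) = 5"
  proof (rule border_rank_eqI)
    show "tensor_rank (commutator_degeneration (1 / of_nat (Suc n))) \<le> 5" for n
      by (rule tensor_rank_commutator_degeneration_le_5) (simp del: of_nat_Suc)
    show False if "\<And>n. tensor_rank (S n) < 5" and "S \<longlonglongrightarrow> struct_tensor commutator" for S
    proof (rule commutator_not_limit_of_rank_le_4)
      show "tensor_rank (S n) \<le> 4" for n
        using that(1)[of n] by simp
    qed (fact that(2))
  qed (rule commutator_degeneration_tendsto)
  moreover have "\<not> tensor_rank (struct_tensor commutator) \<le> 4"
    using commutator_not_limit_of_rank_le_4[of "\<lambda>_. struct_tensor commutator"] by auto
  ultimately show ?thesis
    using tensor_rank_commutator_le_6 by auto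
qed

end
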